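(* Let $P$ be an $r$-differential poset and let $j_{m-1}\lessdot j_m$ be a covering pair in $P$, with $j_m$ of rank $m$, such that each of $j_{m-1}$ and $j_m$ covers at most one element of $P$. Then for every integer $n\ge m$ there is a saturated chain $j_{m-1}\lessdot j_m\lessdot j_{m+1}\lessdot\cdots\lessdot j_{n-1}\lessdot j_n$ in $P$ in which every $j_\ell$ covers at most one element of $P$.
   Context: An $r$-differential poset ($r$ a positive integer) is a graded poset with a minimum element, finite intervals and finite rank sets, such that (D1) an element covering exactly $m$ elements is covered by exactly $m+r$ elements, and (D2) two distinct elements that both cover exactly $m$ common elements are both covered by exactly $m$ common elements. $x\lessdot y$ means $y$ covers $x$. *)

theory Defs
  imports Main
begin

text \<open>The poset is the whole type 'a (with its partial order). covers x y: y covers x.\<close>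
definition covers :: "'a::order \<Rightarrow> 'a \<Rightarrow> bool" where
  "covers x y \<longleftrightarrow> x < y \<and> \<not> (\<exists>z. x < z \<and> z < y)"

definition lower_covers :: "'a::order \<Rightarrow> 'a set" where
  "lower_covers x = {z. covers z x}"

definition upper_covers :: "'a::order \<Rightarrow> 'a set" where
  "upper_covers x = {y. covers x y}"

definition graded_locfin_poset :: "('a::order \<Rightarrow> nat) \<Rightarrow> bool" where
  "graded_locfin_poset rk \<longleftrightarrow>
     (\<exists>z. (\<forall>x. z \<le> x) \<and> rk z = 0) \<and>
     (\<forall>x y. covers x y \<longrightarrow> rk y = rk x + 1) \<and>
     (\<forall>x y::'a. finite {z. x \<le> z \<and> z \<le> y}) \<and>
     (\<forall>n. finite {x. rk x = n})"

definition differential_poset :: "nat \<Rightarrow> ('a::order \<Rightarrow> nat) \<Rightarrow> bool" where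
  "differential_poset r rk \<longleftrightarrow> r > 0 \<and> graded_locfin_poset rk \<and>
     (\<forall>x::'a. card (upper_covers x) = card (lower_covers x) + r) \<and>
     (\<forall>x y::'a. x \<noteq> y \<longrightarrow>
        card (lower_covers x \<inter> lower_covers y) = card (upper_covers x \<inter> upper_covers y))"

end

theory Submission
  imports Defs
begin

text \<open>Call an element thin if it covers at most one element. If \<open>x \<lessdot> y\<close> are both thin but every
  upper cover \<open>z\<close> of \<open>y\<close> also covers some \<open>w \<noteq> y\<close>, then (D2) applied to \<open>y, w\<close> forces \<open>x \<lessdot> w\<close>
  and \<open>z\<close> to be the only common upper cover of \<open>y\<close> and \<open>w\<close>. So \<open>z \<mapsto> w\<close> injects the \<open>r + 1\<close>
  upper covers of \<open>y\<close> into the at most \<open>r\<close> upper covers of \<open>x\<close> other than \<open>y\<close>, which is absurd.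
  Hence every thin covering pair extends upwards by a thin element, and the chain is built
  by dependent choice.\<close>

context
  fixes r :: nat and rk :: "'a::order \<Rightarrow> nat"
  assumes D: "differential_poset r rk"
begin

lemma differential_poset_card_upper_covers:
  "card (upper_covers (x :: 'a)) = card (lower_covers x) + r"
  using D unfolding differential_poset_def by blast

lemma differential_poset_card_common_covers:
  "(x :: 'a) \<noteq> y \<Longrightarrow>
    card (lower_covers x \<inter> lower_covers y) = card (upper_covers x \<inter> upper_covers y)"
  using D unfolding differential_poset_def by blast

lemma differential_poset_rank_covers:
  "covers (x :: 'a) y \<Longrightarrow> rk y = rk x + 1"
  using D unfolding differential_poset_def graded_locfin_poset_def by blast

lemma finite_lower_covers: "finite (lower_covers (x :: 'a))"
proof (rule finite_subset)
  show "lower_covers x \<subseteq> {z. rk z = rk x - 1}"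
    using differential_poset_rank_covers unfolding lower_covers_def by auto
  show "finite {z. rk z = rk x - 1}"
    using D unfolding differential_poset_def graded_locfin_poset_def by blast
qed

lemma finite_upper_covers: "finite (upper_covers (x :: 'a))"
proof -
  have "r > 0" using D unfolding differential_poset_def by blast
  then have "card (upper_covers x) \<noteq> 0"
    using differential_poset_card_upper_covers by simp
  then show ?thesis using card.infinite by metis
qed

lemma lower_covers_eq_singleton:
  assumes "covers (x :: 'a) y" and "card (lower_covers y) \<le> 1"
  shows "lower_covers y = {x}"
proof -
  have "x \<in> lower_covers y" using assms(1) unfolding lower_covers_def by simp
  with assms(2) finite_lower_covers show ?thesis
    by (auto simp: card_le_Suc0_iff_eq)
qed

lemma sibling_of_thin_element:
  assumes Ly: "lower_covers (y :: 'a) = {x}"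
    and "covers y z" and "covers w z" and "w \<noteq> y"
  shows "covers x w" and "upper_covers y \<inter> upper_covers w = {z}"
proof -
  let ?L = "lower_covers y \<inter> lower_covers w" and ?U = "upper_covers y \<inter> upper_covers w"
  have "z \<in> ?U" using assms(2,3) unfolding upper_covers_def by simp
  moreover have "finite ?U" using finite_upper_covers by blast
  ultimately have "card ?U \<ge> 1" by (auto simp: Suc_le_eq card_gt_0_iff)
  moreover have "card ?L \<le> 1" using Ly by (simp add: card_le_Suc0_iff_eq)
  moreover have "card ?L = card ?U"
    using differential_poset_card_common_covers[of y w] assms(4) by auto
  ultimately have "card ?L = 1" and "card ?U = 1" by linarith+
  then have "?L \<noteq> {}" by auto
  then show "covers x w" using Ly unfolding lower_covers_def by auto
  from \<open>card ?U = 1\<close> obtain u where "?U = {u}" by (rule card_1_singletonE)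
  with \<open>z \<in> ?U\<close> show "?U = {z}" by simp
qed

lemma thin_covering_pair_extends:
  assumes cxy: "covers (x :: 'a) y"
    and thin_x: "card (lower_covers x) \<le> 1" and thin_y: "card (lower_covers y) \<le> 1"
  shows "\<exists>z. covers y z \<and> card (lower_covers z) \<le> 1"
proof (rule ccontr)
  assume no_thin: "\<not> ?thesis"
  have Ly: "lower_covers y = {x}" using lower_covers_eq_singleton[OF cxy thin_y] .
  have "\<exists>w. covers w z \<and> w \<noteq> y" if "z \<in> upper_covers y" for z
  proof (rule ccontr)
    assume "\<nexists>w. covers w z \<and> w \<noteq> y"
    then have "lower_covers z \<subseteq> {y}" unfolding lower_covers_def by auto
    then have "card (lower_covers z) \<le> 1" using card_mono[of "{y}"] by fastforce
    with no_thin that show False unfolding upper_covers_def by auto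
  qed
  then obtain f where f: "\<And>z. z \<in> upper_covers y \<Longrightarrow> covers (f z) z \<and> f z \<noteq> y"
    by metis
  have sibling: "covers x (f z)" "upper_covers y \<inter> upper_covers (f z) = {z}"
    if "z \<in> upper_covers y" for z
    using sibling_of_thin_element[OF Ly, of z "f z"] f[OF that] that
    unfolding upper_covers_def by auto
  have "inj_on f (upper_covers y)"
  proof (rule inj_onI)
    fix z z' assume z: "z \<in> upper_covers y" and z': "z' \<in> upper_covers y" and "f z = f z'"
    then have "z' \<in> upper_covers y \<inter> upper_covers (f z)"
      using f[OF z'] unfolding upper_covers_def by auto
    then show "z = z'" using sibling(2)[OF z] by auto
  qed
  moreover have "f ` upper_covers y \<subseteq> upper_covers x - {y}"
    using sibling(1) f unfolding upper_covers_def by auto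
  ultimately have "card (upper_covers y) \<le> card (upper_covers x - {y})"
    using card_inj_on_le finite_upper_covers by blast
  also have "\<dots> = card (upper_covers x) - 1"
    using cxy finite_upper_covers unfolding upper_covers_def by simp
  also have "\<dots> \<le> r"
    using differential_poset_card_upper_covers thin_x by simp
  finally show False
    using differential_poset_card_upper_covers[of y] Ly by simp
qed

end

lemma infinite_chain_of_successors:
  assumes "R a b" and "\<And>x y. R x y \<Longrightarrow> \<exists>z. R y z"
  shows "\<exists>s. s 0 = a \<and> s 1 = b \<and> (\<forall>k. R (s k) (s (Suc k)))"
proof -
  \<comment> \<open>Choose the consecutive pairs \<open>(s k, s (Suc k))\<close> of the chain.\<close>
  let ?P = "\<lambda>n p. R (fst p) (snd p) \<and> (n = 0 \<longrightarrow> p = (a, b))"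
  have "\<exists>f. \<forall>n. ?P n (f n) \<and> fst (f (Suc n)) = snd (f n)"
  proof (rule dependent_nat_choice)
    show "\<exists>p. ?P 0 p" using assms(1) by auto
    show "\<exists>q. ?P (Suc n) q \<and> fst q = snd p" if "?P n p" for p n
      using assms(2) that by fastforce
  qed
  then obtain f where f: "\<And>n. ?P n (f n) \<and> fst (f (Suc n)) = snd (f n)" by blast
  have "fst (f 0) = a" "fst (f 1) = b" using f[of 0] by auto
  moreover have "R (fst (f k)) (fst (f (Suc k)))" for k using f[of k] by simp
  ultimately show ?thesis by (intro exI[of _ "\<lambda>k. fst (f k)"]) auto
qed

theorem proposition6p11:
  fixes rk :: "'a::order \<Rightarrow> nat" and r m :: nat and a b :: 'a
  assumes "differential_poset r rk"
    and "covers a b" and "rk b = m"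
    and "card (lower_covers a) \<le> 1" and "card (lower_covers b) \<le> 1"
  shows "\<forall>n\<ge>m. \<exists>j :: nat \<Rightarrow> 'a. j (m - 1) = a \<and> j m = b \<and>
           (\<forall>l. m - 1 \<le> l \<and> l < n \<longrightarrow> covers (j l) (j (l + 1))) \<and>
           (\<forall>l. m - 1 \<le> l \<and> l \<le> n \<longrightarrow> card (lower_covers (j l)) \<le> 1)"
proof -
  let ?thin_pair = "\<lambda>x y. covers x y \<and> card (lower_covers x) \<le> 1 \<and> card (lower_covers y) \<le> 1"
  have "\<exists>z. ?thin_pair y z" if "?thin_pair x y" for x y :: 'a
    using thin_covering_pair_extends[OF assms(1)] that by blast
  then obtain s where s: "s 0 = a" "s 1 = b" "\<And>k. ?thin_pair (s k) (s (Suc k))"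
    using infinite_chain_of_successors[of ?thin_pair a b] assms(2,4,5) by blast
  have "m \<ge> 1" using differential_poset_rank_covers[OF assms(1,2)] assms(3) by simp
  show ?thesis
  proof (intro allI impI exI[of _ "\<lambda>l. s (l - (m - 1))"])
    show "s (m - 1 - (m - 1)) = a \<and> s (m - (m - 1)) = b \<and>
        (\<forall>l. m - 1 \<le> l \<and> l < n \<longrightarrow> covers (s (l - (m - 1))) (s (l + 1 - (m - 1)))) \<and>
        (\<forall>l. m - 1 \<le> l \<and> l \<le> n \<longrightarrow> card (lower_covers (s (l - (m - 1)))) \<le> 1)" for n
      using s \<open>m \<ge> 1\<close> by (auto simp: Suc_diff_le)
  qed
qed

end
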